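(* The operator $T_2\,\omega_r^{1/2}$, defined on the subspace $D_0$, is bounded.
   Context: Let $\mathcal{K}=L^2(\mathbb{R}^3,d^3k)$, $\omega(\vec k)=|\vec k|$. Let $\Gamma$ be the antiunitary involution $(\Gamma v)(\vec k)=\overline{v(-\vec k)}$. For $\epsilon>0$ let $P_\epsilon$ be the orthogonal projection onto $\{v\in\mathcal{K}: v(\vec k)=0\text{ for }|\vec k|<\epsilon\}$, and $D_0=\bigcup_{\epsilon>0}P_\epsilon\mathcal{K}$. Fix a strictly decreasing sequence $(\epsilon_i)_{i\in\mathbb{N}}$ of positive numbers with $\epsilon_i\to0$; put $P_i=P_{\epsilon_{i+1}}-P_{\epsilon_i}$ for $i\in\mathbb{N}$ and $P_0=P_{\epsilon_1}$. Fix finite-rank orthogonal projections $Q_i$ ($i\in\mathbb{N}$) with $Q_i\Gamma=\Gamma Q_i$ and $Q_iP_i=Q_i$, and numbers $b_i\in(0,1)$ with $b_i\to0$ and $\sum_i\frac{\epsilon_i}{b_i^2}\mathrm{rk}\,Q_i<\infty$. On $D_0$ define $T_2=\mathbf{1}+\sum_i(\frac{1}{b_i}-1)Q_i$ (only finitely many terms act nontrivially on any vector of $D_0$). Let $\omega_r=\omega(\mathbf{1}-P_0)+\epsilon_1P_0$; note $\omega_r^{1/2}D_0=D_0$. *)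

theory Defs
  imports "HOL-Analysis.Analysis"
begin

text \<open>The Hilbert space K = L^2(R^3, d^3k), represented by (representatives of)
  square-integrable complex functions on real^3 w.r.t. Lebesgue measure.\<close>

type_synonym vec3 = "real ^ 3"
type_synonym kfun = "vec3 \<Rightarrow> complex"

definition L2 :: "kfun set" where
  "L2 = {f. f \<in> borel_measurable lebesgue \<and> integrable lebesgue (\<lambda>k. (cmod (f k))^2)}"

definition l2inner :: "kfun \<Rightarrow> kfun \<Rightarrow> complex" where
  "l2inner f g = (LINT k|lebesgue. cnj (f k) * g k)"

definition l2norm :: "kfun \<Rightarrow> real" where
  "l2norm f = sqrt (LINT k|lebesgue. (cmod (f k))^2)"

definition Gam :: "kfun \<Rightarrow> kfun" where
  "Gam v = (\<lambda>k. cnj (v (- k)))"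

definition Pcut :: "real \<Rightarrow> kfun \<Rightarrow> kfun" where
  "Pcut eps v = (\<lambda>k. if norm k < eps then 0 else v k)"

text \<open>D_0 = union over eps>0 of P_eps K.\<close>
definition D0 :: "kfun set" where
  "D0 = {v \<in> L2. \<exists>eps>0. AE k in lebesgue. norm k < eps \<longrightarrow> v k = 0}"

definition Pshell :: "(nat \<Rightarrow> real) \<Rightarrow> nat \<Rightarrow> kfun \<Rightarrow> kfun" where
  "Pshell eps i v = (\<lambda>k. Pcut (eps (Suc i)) v k - Pcut (eps i) v k)"

text \<open>Finite-rank orthogonal projection with orthonormal basis e 0, ..., e (r-1) of its range:
  Q v = sum_j <e_j, v> e_j.\<close>
definition fproj :: "(nat \<Rightarrow> kfun) \<Rightarrow> nat \<Rightarrow> kfun \<Rightarrow> kfun" where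
  "fproj e r v = (\<lambda>k. \<Sum>j<r. l2inner (e j) v * e j k)"

definition orthonormal_fam :: "(nat \<Rightarrow> kfun) \<Rightarrow> nat \<Rightarrow> bool" where
  "orthonormal_fam e r \<longleftrightarrow> (\<forall>j<r. e j \<in> L2) \<and>
     (\<forall>j<r. \<forall>l<r. l2inner (e j) (e l) = (if j = l then 1 else 0))"

text \<open>T_2 = 1 + sum_{i>=1} (1/b_i - 1) Q_i, with Q_i = fproj (e i) (r i).\<close>
definition T2 :: "(nat \<Rightarrow> real) \<Rightarrow> (nat \<Rightarrow> nat \<Rightarrow> kfun) \<Rightarrow> (nat \<Rightarrow> nat) \<Rightarrow> kfun \<Rightarrow> kfun" where
  "T2 b e r v = (\<lambda>k. v k + (\<Sum>i. complex_of_real (1 / b (Suc i) - 1) * fproj (e (Suc i)) (r (Suc i)) v k))"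

text \<open>omega_r = omega (1 - P_0) + eps_1 P_0, i.e. multiplication by |k| on |k| < eps_1 and by eps_1
  on |k| >= eps_1; omega_r^{1/2} is multiplication by the square root.\<close>
definition omega_r :: "real \<Rightarrow> vec3 \<Rightarrow> real" where
  "omega_r eps1 k = (if norm k < eps1 then norm k else eps1)"

definition omega_r_sqrt :: "real \<Rightarrow> kfun \<Rightarrow> kfun" where
  "omega_r_sqrt eps1 v = (\<lambda>k. complex_of_real (sqrt (omega_r eps1 k)) * v k)"

end

theory Submission
  imports Defs
begin

(*
  Write w = omega_r^(1/2) v. For v in D0 only finitely many Q_i act on w, because
  Q_i = Q_i P_i and the shells P_i eventually lie in the ball where v vanishes; so
  T2 w = w + sum_i (1/b_i - 1) Q_i w is a finite sum. On the range of P_i we have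
  omega_r <= eps_i, hence by Bessel's inequality ||Q_i w||^2 <= eps_i ||P_i v||^2.
  A Cauchy-Schwarz inequality with weights eps_i / b_i^2 then bounds
  ||sum_i (1/b_i - 1) Q_i w||^2 by (sum_i eps_i rk Q_i / b_i^2) * sum_i ||P_i v||^2,
  and the last sum is at most ||v||^2 since the shells are disjoint.
*)

abbreviation l2norm_sq :: "kfun \<Rightarrow> real" where
  "l2norm_sq f \<equiv> LINT k|lebesgue. (cmod (f k))^2"

lemma l2norm_eq_sqrt: "l2norm f = sqrt (l2norm_sq f)"
  by (simp add: l2norm_def)

lemma l2norm_sq_nonneg: "0 \<le> l2norm_sq f"
  by (simp add: integral_nonneg)

lemma L2_measurable: "f \<in> L2 \<Longrightarrow> f \<in> borel_measurable lebesgue"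
  by (simp add: L2_def)

lemma L2_integrable: "f \<in> L2 \<Longrightarrow> integrable lebesgue (\<lambda>k. (cmod (f k))^2)"
  by (simp add: L2_def)

lemma L2_dominated:
  assumes f: "f \<in> L2" and g: "g \<in> borel_measurable lebesgue"
    and le: "\<And>k. cmod (g k) \<le> B * cmod (f k)"
  shows "g \<in> L2"
proof -
  have "integrable lebesgue (\<lambda>k. (cmod (g k))^2)"
  proof (rule Bochner_Integration.integrable_bound)
    show "integrable lebesgue (\<lambda>k. B^2 * (cmod (f k))^2)"
      using L2_integrable[OF f] by simp
    show "AE k in lebesgue. norm ((cmod (g k))^2) \<le> norm (B^2 * (cmod (f k))^2)"
      using power_mono[OF le norm_ge_zero, of _ 2] by (simp add: power_mult_distrib)
  qed (use g in measurable)
  then show ?thesis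
    using g by (simp add: L2_def)
qed

lemma cmod_add_sq_le: "(cmod (x + y))^2 \<le> 2 * (cmod x)^2 + 2 * (cmod y)^2"
proof -
  have "(cmod (x + y))^2 \<le> (cmod x + cmod y)^2"
    by (rule power_mono[OF norm_triangle_ineq]) simp
  also have "\<dots> \<le> 2 * (cmod x)^2 + 2 * (cmod y)^2"
    using zero_le_power2[of "cmod x - cmod y"] unfolding power2_sum power2_diff by linarith
  finally show ?thesis .
qed

lemma L2_add:
  assumes f: "f \<in> L2" and g: "g \<in> L2"
  shows "(\<lambda>k. f k + g k) \<in> L2"
proof -
  have "integrable lebesgue (\<lambda>k. (cmod (f k + g k))^2)"
  proof (rule Bochner_Integration.integrable_bound)
    show "integrable lebesgue (\<lambda>k. 2 * (cmod (f k))^2 + 2 * (cmod (g k))^2)"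
      using L2_integrable[OF f] L2_integrable[OF g] by simp
    show "AE k in lebesgue. norm ((cmod (f k + g k))^2) \<le> norm (2 * (cmod (f k))^2 + 2 * (cmod (g k))^2)"
      using cmod_add_sq_le by simp
  qed (use L2_measurable[OF f] L2_measurable[OF g] in measurable)
  then show ?thesis
    using L2_measurable[OF f] L2_measurable[OF g] by (simp add: L2_def)
qed

lemma L2_mult_left: "f \<in> L2 \<Longrightarrow> (\<lambda>k. c * f k) \<in> L2"
  by (rule L2_dominated[where B = "cmod c"]) (auto simp: norm_mult dest: L2_measurable)

lemma L2_sum: "(\<And>i. i \<in> I \<Longrightarrow> f i \<in> L2) \<Longrightarrow> (\<lambda>k. \<Sum>i\<in>I. f i k) \<in> L2"
proof (induction I rule: infinite_finite_induct)
  case (insert x F)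
  then show ?case by (simp add: L2_add)
qed (simp_all add: L2_def)

lemma l2norm_sq_mono:
  assumes g: "g \<in> L2" and f: "f \<in> L2" and le: "\<And>k. (cmod (g k))^2 \<le> c * (cmod (f k))^2"
  shows "l2norm_sq g \<le> c * l2norm_sq f"
proof -
  have "l2norm_sq g \<le> (LINT k|lebesgue. c * (cmod (f k))^2)"
    using L2_integrable[OF g] L2_integrable[OF f] le by (intro integral_mono) auto
  then show ?thesis by simp
qed

lemma l2norm_sq_add_le:
  assumes "f \<in> L2" and "g \<in> L2"
  shows "l2norm_sq (\<lambda>k. f k + g k) \<le> 2 * l2norm_sq f + 2 * l2norm_sq g"
proof -
  have "l2norm_sq (\<lambda>k. f k + g k) \<le> (LINT k|lebesgue. 2 * (cmod (f k))^2 + 2 * (cmod (g k))^2)"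
    using assms L2_add[OF assms] cmod_add_sq_le
    by (intro integral_mono) (auto simp: L2_integrable)
  also have "\<dots> = 2 * l2norm_sq f + 2 * l2norm_sq g"
    using assms by (simp add: L2_integrable)
  finally show ?thesis .
qed

lemma l2norm_sq_mult_left: "l2norm_sq (\<lambda>k. c * f k) = (cmod c)^2 * l2norm_sq f"
  by (simp add: norm_mult power_mult_distrib)

lemma borel_measurable_lebesgue_ident [measurable]:
  "(\<lambda>x::'a::euclidean_space. x) \<in> borel_measurable lebesgue"
  using id_borel_measurable_lebesgue unfolding id_def .

lemma borel_measurable_cnj [measurable]:
  "f \<in> borel_measurable M \<Longrightarrow> (\<lambda>x. cnj (f x)) \<in> borel_measurable M"
  by (rule measurable_compose[where f = f]) (auto intro!: borel_measurable_continuous_onI continuous_intros)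

lemma integrable_cnj_mult:
  assumes f: "f \<in> L2" and g: "g \<in> L2"
  shows "integrable lebesgue (\<lambda>k. cnj (f k) * g k)"
proof (rule Bochner_Integration.integrable_bound)
  show "integrable lebesgue (\<lambda>k. (cmod (f k))^2 + (cmod (g k))^2)"
    using L2_integrable[OF f] L2_integrable[OF g] by simp
  have "cmod x * cmod y \<le> (cmod x)^2 + (cmod y)^2" for x y :: complex
    using sum_squares_bound[of "cmod x" "cmod y"] mult_nonneg_nonneg[OF norm_ge_zero norm_ge_zero, of x y]
    by linarith
  then show "AE k in lebesgue. norm (cnj (f k) * g k) \<le> norm ((cmod (f k))^2 + (cmod (g k))^2)"
    by (simp add: norm_mult)
qed (use L2_measurable[OF f] L2_measurable[OF g] in measurable)

lemma l2inner_self: "l2inner f f = complex_of_real (l2norm_sq f)"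
proof -
  have "cnj z * z = complex_of_real ((cmod z)^2)" for z
    by (metis complex_norm_square mult.commute)
  then show ?thesis
    unfolding l2inner_def by (simp only: integral_complex_of_real)
qed

lemma l2inner_sum_left:
  assumes "\<And>j. j < n \<Longrightarrow> e j \<in> L2" and "g \<in> L2"
  shows "l2inner (\<lambda>k. \<Sum>j<n. a j * e j k) g = (\<Sum>j<n. cnj (a j) * l2inner (e j) g)"
proof -
  have "l2inner (\<lambda>k. \<Sum>j<n. a j * e j k) g
      = (LINT k|lebesgue. (\<Sum>j<n. cnj (a j) * (cnj (e j k) * g k)))"
    unfolding l2inner_def by (simp add: sum_distrib_right mult.assoc)
  also have "\<dots> = (\<Sum>j<n. LINT k|lebesgue. cnj (a j) * (cnj (e j k) * g k))"
    using assms by (intro Bochner_Integration.integral_sum integrable_mult_right integrable_cnj_mult) auto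
  also have "\<dots> = (\<Sum>j<n. cnj (a j) * l2inner (e j) g)"
    by (simp add: l2inner_def)
  finally show ?thesis .
qed

lemma l2inner_sum_right:
  assumes "\<And>j. j < n \<Longrightarrow> e j \<in> L2" and "f \<in> L2"
  shows "l2inner f (\<lambda>k. \<Sum>j<n. a j * e j k) = (\<Sum>j<n. a j * l2inner f (e j))"
proof -
  have "l2inner f (\<lambda>k. \<Sum>j<n. a j * e j k)
      = (LINT k|lebesgue. (\<Sum>j<n. a j * (cnj (f k) * e j k)))"
    unfolding l2inner_def by (simp add: sum_distrib_left mult.left_commute)
  also have "\<dots> = (\<Sum>j<n. LINT k|lebesgue. a j * (cnj (f k) * e j k))"
    using assms by (intro Bochner_Integration.integral_sum integrable_mult_right integrable_cnj_mult) auto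
  also have "\<dots> = (\<Sum>j<n. a j * l2inner f (e j))"
    by (simp add: l2inner_def)
  finally show ?thesis .
qed

lemma l2norm_sq_diff:
  assumes f: "f \<in> L2" and g: "g \<in> L2"
  shows "l2norm_sq (\<lambda>k. f k - g k) = l2norm_sq f - 2 * Re (l2inner g f) + l2norm_sq g"
proof -
  define h where "h k = cnj (g k) * f k" for k
  have "(cmod (f k - g k))^2 = (cmod (f k))^2 - 2 * Re (h k) + (cmod (g k))^2" for k
    by (simp add: h_def cmod_power2 power2_diff algebra_simps)
  moreover have "integrable lebesgue h"
    unfolding h_def by (rule integrable_cnj_mult[OF g f])
  ultimately show ?thesis
    using L2_integrable[OF f] L2_integrable[OF g] by (simp add: l2inner_def h_def[symmetric])
qed

lemma L2_fproj: "orthonormal_fam e r \<Longrightarrow> fproj e r u \<in> L2"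
  unfolding fproj_def orthonormal_fam_def by (auto intro!: L2_sum L2_mult_left)

lemma fproj_eq_0_if_AE_0:
  assumes "AE k in lebesgue. u k = 0"
  shows "fproj e r u = (\<lambda>k. 0)"
proof -
  have "l2inner (e j) u = 0" for j
    unfolding l2inner_def by (rule integral_eq_zero_AE) (use assms in eventually_elim, simp)
  then show ?thesis
    by (simp add: fproj_def)
qed

lemma l2norm_sq_fproj_le:
  assumes on: "orthonormal_fam e r" and u: "u \<in> L2"
  shows "l2norm_sq (fproj e r u) \<le> l2norm_sq u"
proof -
  define a where "a j = l2inner (e j) u" for j
  define Q where "Q = fproj e r u"
  have e: "\<And>j. j < r \<Longrightarrow> e j \<in> L2"
    using on by (simp add: orthonormal_fam_def)
  have Q_eq: "Q = (\<lambda>k. \<Sum>j<r. a j * e j k)"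
    by (simp add: Q_def fproj_def a_def)
  have Q: "Q \<in> L2"
    unfolding Q_def by (rule L2_fproj[OF on])
  have "l2inner (e j) Q = a j" if "j < r" for j
  proof -
    have "l2inner (e j) Q = (\<Sum>l<r. a l * (if j = l then 1 else 0))"
      unfolding Q_eq using on that
      by (simp add: l2inner_sum_right[OF e e] orthonormal_fam_def)
    then show ?thesis
      using that by (simp add: if_distrib cong: if_cong)
  qed
  then have "l2inner Q u = l2inner Q Q"
    by (subst (1 2) Q_eq) (simp add: l2inner_sum_left[OF e] Q u a_def)
  then have inner: "Re (l2inner Q u) = l2norm_sq Q"
    by (simp add: l2inner_self)
  \<comment> \<open>Pythagoras: \<open>\<parallel>u\<parallel>\<^sup>2 = \<parallel>Q u\<parallel>\<^sup>2 + \<parallel>u - Q u\<parallel>\<^sup>2\<close>.\<close>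
  have "0 \<le> l2norm_sq (\<lambda>k. u k - Q k)"
    by (rule l2norm_sq_nonneg)
  also have "\<dots> = l2norm_sq u - l2norm_sq Q"
    using l2norm_sq_diff[OF u Q] inner by simp
  finally show ?thesis
    by (simp add: Q_def)
qed

lemma norm_sum_sq_le_weighted:
  fixes x :: "'i \<Rightarrow> 'a::real_normed_vector"
  assumes lam: "\<And>i. i \<in> I \<Longrightarrow> 0 < lam i"
  shows "(norm (\<Sum>i\<in>I. x i))^2 \<le> (\<Sum>i\<in>I. lam i) * (\<Sum>i\<in>I. (norm (x i))^2 / lam i)"
proof -
  have "norm (x i) = sqrt (lam i) * (norm (x i) / sqrt (lam i))" if "i \<in> I" for i
    using lam[OF that] by simp
  then have "(\<Sum>i\<in>I. norm (x i)) = (\<Sum>i\<in>I. sqrt (lam i) * (norm (x i) / sqrt (lam i)))"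
    by (rule sum.cong[OF refl])
  then have "norm (\<Sum>i\<in>I. x i) \<le> (\<Sum>i\<in>I. sqrt (lam i) * (norm (x i) / sqrt (lam i)))"
    using norm_sum[of x I] by simp
  then have "(norm (\<Sum>i\<in>I. x i))^2 \<le> (\<Sum>i\<in>I. sqrt (lam i) * (norm (x i) / sqrt (lam i)))^2"
    by (rule power_mono) simp
  also have "\<dots> \<le> (\<Sum>i\<in>I. (sqrt (lam i))^2) * (\<Sum>i\<in>I. (norm (x i) / sqrt (lam i))^2)"
    by (rule Cauchy_Schwarz_ineq_sum)
  also have "\<dots> = (\<Sum>i\<in>I. lam i) * (\<Sum>i\<in>I. (norm (x i))^2 / lam i)"
    using lam by (simp add: power_divide less_imp_le)
  finally show ?thesis .
qed

lemma l2norm_sq_sum_le_weighted: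
  assumes I: "finite I" and F: "\<And>i. i \<in> I \<Longrightarrow> F i \<in> L2" and lam: "\<And>i. i \<in> I \<Longrightarrow> 0 < lam i"
  shows "l2norm_sq (\<lambda>k. \<Sum>i\<in>I. F i k) \<le> (\<Sum>i\<in>I. lam i) * (\<Sum>i\<in>I. l2norm_sq (F i) / lam i)"
proof -
  have int: "integrable lebesgue (\<lambda>k. (cmod (F i k))^2 / lam i)" if "i \<in> I" for i
    using L2_integrable[OF F[OF that]] by simp
  have "l2norm_sq (\<lambda>k. \<Sum>i\<in>I. F i k)
      \<le> (LINT k|lebesgue. (\<Sum>i\<in>I. lam i) * (\<Sum>i\<in>I. (cmod (F i k))^2 / lam i))"
    using L2_integrable[OF L2_sum[OF F]] int norm_sum_sq_le_weighted[OF lam]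
    by (intro integral_mono) auto
  also have "\<dots> = (\<Sum>i\<in>I. lam i) * (\<Sum>i\<in>I. l2norm_sq (F i) / lam i)"
    using int by (simp add: Bochner_Integration.integral_sum)
  finally show ?thesis .
qed

lemma Pshell_eq:
  "eps (Suc i) \<le> eps i \<Longrightarrow>
     Pshell eps i v k = (if eps (Suc i) \<le> norm k \<and> norm k < eps i then v k else 0)"
  by (auto simp: Pshell_def Pcut_def)

lemma L2_Pshell:
  assumes v: "v \<in> L2"
  shows "Pshell eps i v \<in> L2"
proof (rule L2_dominated[OF v, where B = 1])
  show "Pshell eps i v \<in> borel_measurable lebesgue"
    using L2_measurable[OF v] unfolding Pshell_def Pcut_def by measurable
qed (auto simp: Pshell_def Pcut_def)

lemma Pshell_AE_eq_0:
  assumes "eps (Suc i) \<le> eps i" and "eps i \<le> r"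
    and "AE k in lebesgue. norm k < r \<longrightarrow> v k = 0"
  shows "AE k in lebesgue. Pshell eps i v k = 0"
  using assms(3) by eventually_elim (use assms(1,2) in \<open>simp add: Pshell_eq\<close>)

lemma sum_Pshell_sq_le:
  assumes dec: "\<And>i. m \<le> i \<Longrightarrow> eps (Suc i) \<le> eps i"
  shows "(\<Sum>i=m..<n. (cmod (Pshell eps i v k))^2) \<le> (cmod (v k))^2"
proof (cases "m \<le> n")
  case True
  define h where "h i = (if eps i \<le> norm k then 1 else 0 :: real)" for i
  \<comment> \<open>The shells are disjoint: \<open>h (Suc i) - h i\<close> is the indicator of shell \<open>i\<close>.\<close>
  have "(cmod (Pshell eps i v k))^2 = (cmod (v k))^2 * (h (Suc i) - h i)" if "m \<le> i" for i
    using dec[OF that] by (auto simp: Pshell_eq h_def)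
  then have "(\<Sum>i=m..<n. (cmod (Pshell eps i v k))^2) = (cmod (v k))^2 * (h n - h m)"
    by (simp add: sum_distrib_left[symmetric] sum_Suc_diff'[OF True])
  also have "\<dots> \<le> (cmod (v k))^2"
    by (simp add: h_def)
  finally show ?thesis .
qed simp

lemma sum_l2norm_sq_Pshell_le:
  assumes dec: "\<And>i. m \<le> i \<Longrightarrow> eps (Suc i) \<le> eps i"
    and I: "finite I" "I \<subseteq> {m..}" and v: "v \<in> L2"
  shows "(\<Sum>i\<in>I. l2norm_sq (Pshell eps i v)) \<le> l2norm_sq v"
proof -
  obtain n where "I \<subseteq> {..<n}"
    using I(1) finite_nat_iff_bounded by blast
  with I(2) have sub: "I \<subseteq> {m..<n}"
    by auto
  have int: "integrable lebesgue (\<lambda>k. (cmod (Pshell eps i v k))^2)" for i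
    by (rule L2_integrable[OF L2_Pshell[OF v]])
  have "(\<Sum>i\<in>I. l2norm_sq (Pshell eps i v)) \<le> (\<Sum>i=m..<n. l2norm_sq (Pshell eps i v))"
    using sub by (intro sum_mono2) (auto simp: l2norm_sq_nonneg)
  also have "\<dots> = (LINT k|lebesgue. (\<Sum>i=m..<n. (cmod (Pshell eps i v k))^2))"
    using int by (simp add: Bochner_Integration.integral_sum)
  also have "\<dots> \<le> l2norm_sq v"
    using int L2_integrable[OF v] sum_Pshell_sq_le[where eps = eps, OF dec]
    by (intro integral_mono) auto
  finally show ?thesis .
qed

lemma omega_r_nonneg: "0 \<le> e1 \<Longrightarrow> 0 \<le> omega_r e1 k"
  by (simp add: omega_r_def)

lemma omega_r_le: "omega_r e1 k \<le> e1"
  by (simp add: omega_r_def)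

lemma omega_r_le_norm: "omega_r e1 k \<le> norm k"
  by (simp add: omega_r_def)

lemma cmod_omega_r_sqrt_sq:
  "0 \<le> e1 \<Longrightarrow> (cmod (omega_r_sqrt e1 v k))^2 = omega_r e1 k * (cmod (v k))^2"
  by (simp add: omega_r_sqrt_def norm_mult power_mult_distrib omega_r_nonneg)

lemma L2_omega_r_sqrt:
  assumes e1: "0 \<le> e1" and v: "v \<in> L2"
  shows "omega_r_sqrt e1 v \<in> L2"
proof (rule L2_dominated[OF v, where B = "sqrt e1"])
  show "omega_r_sqrt e1 v \<in> borel_measurable lebesgue"
    using L2_measurable[OF v] unfolding omega_r_sqrt_def omega_r_def by measurable
  show "cmod (omega_r_sqrt e1 v k) \<le> sqrt e1 * cmod (v k)" for k
    using omega_r_le[of e1 k] omega_r_nonneg[OF e1, of k]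
    by (simp add: omega_r_sqrt_def norm_mult mult_right_mono)
qed

lemma l2norm_sq_omega_r_sqrt_le:
  assumes "0 \<le> e1" and "v \<in> L2"
  shows "l2norm_sq (omega_r_sqrt e1 v) \<le> e1 * l2norm_sq v"
  using assms L2_omega_r_sqrt omega_r_le
  by (intro l2norm_sq_mono) (auto simp: cmod_omega_r_sqrt_sq mult_right_mono)

lemma Pshell_omega_r_sqrt: "Pshell eps i (omega_r_sqrt e1 v) = omega_r_sqrt e1 (Pshell eps i v)"
  by (auto simp: Pshell_def Pcut_def omega_r_sqrt_def)

lemma l2norm_sq_Pshell_omega_r_sqrt_le:
  assumes dec: "eps (Suc i) \<le> eps i" and e1: "0 \<le> e1" and v: "v \<in> L2"
  shows "l2norm_sq (Pshell eps i (omega_r_sqrt e1 v)) \<le> eps i * l2norm_sq (Pshell eps i v)"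
  unfolding Pshell_omega_r_sqrt
proof (rule l2norm_sq_mono[OF L2_omega_r_sqrt[OF e1 L2_Pshell[OF v]] L2_Pshell[OF v]])
  fix k
  \<comment> \<open>On shell \<open>i\<close> we have \<open>omega_r e1 k \<le> norm k < eps i\<close>.\<close>
  have "omega_r e1 k * (cmod (Pshell eps i v k))^2 \<le> eps i * (cmod (Pshell eps i v k))^2"
    using omega_r_le_norm[of e1 k] by (cases "Pshell eps i v k = 0") (auto simp: Pshell_eq[OF dec] split: if_splits)
  then show "(cmod (omega_r_sqrt e1 (Pshell eps i v) k))^2 \<le> eps i * (cmod (Pshell eps i v k))^2"
    by (simp add: cmod_omega_r_sqrt_sq[OF e1])
qed

locale T2_setting =
  fixes eps b :: "nat \<Rightarrow> real" and e :: "nat \<Rightarrow> nat \<Rightarrow> kfun" and r :: "nat \<Rightarrow> nat"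
  assumes eps_pos: "\<And>i. 1 \<le> i \<Longrightarrow> 0 < eps i"
    and eps_dec: "\<And>i. 1 \<le> i \<Longrightarrow> eps (Suc i) < eps i"
    and eps_lim: "eps \<longlonglongrightarrow> 0"
    and Q_onb: "\<And>i. 1 \<le> i \<Longrightarrow> orthonormal_fam (e i) (r i)"
    and Q_P: "\<And>i v. 1 \<le> i \<Longrightarrow> v \<in> L2 \<Longrightarrow> fproj (e i) (r i) (Pshell eps i v) = fproj (e i) (r i) v"
    and b_range: "\<And>i. 1 \<le> i \<Longrightarrow> 0 < b i \<and> b i < 1"
    and summable_weights: "summable (\<lambda>i. eps (Suc i) / (b (Suc i))^2 * real (r (Suc i)))"
begin

definition weight_sum :: real where
  "weight_sum = (\<Sum>i. eps (Suc i) / (b (Suc i))^2 * real (r (Suc i)))"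

lemma sum_weights_le:
  assumes I: "finite I" "I \<subseteq> {1..}"
  shows "(\<Sum>i\<in>I. eps i / (b i)^2 * real (r i)) \<le> weight_sum"
proof -
  define J where "J = {j. Suc j \<in> I}"
  have "I = Suc ` J"
    using I(2) by (auto simp: J_def image_iff) (metis Suc_le_D atLeast_iff subsetD)
  then have "(\<Sum>i\<in>I. eps i / (b i)^2 * real (r i)) = (\<Sum>j\<in>J. eps (Suc j) / (b (Suc j))^2 * real (r (Suc j)))"
    by (simp add: sum.reindex)
  also have "\<dots> \<le> weight_sum"
    unfolding weight_sum_def using eps_pos I(1) \<open>I = Suc ` J\<close>
    by (intro sum_le_suminf summable_weights) (auto simp: finite_image_iff less_imp_le)
  finally show ?thesis .
qed

lemma l2norm_sq_T2_correction_term_le: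
  assumes i: "1 \<le> i" and v: "v \<in> L2"
  shows "l2norm_sq (\<lambda>k. complex_of_real (1 / b i - 1) * fproj (e i) (r i) (omega_r_sqrt (eps 1) v) k)
    \<le> eps i / (b i)^2 * l2norm_sq (Pshell eps i v)"
proof -
  define w where "w = omega_r_sqrt (eps 1) v"
  have w: "w \<in> L2"
    unfolding w_def using eps_pos[of 1] v by (simp add: L2_omega_r_sqrt)
  have "(cmod (complex_of_real (1 / b i - 1)))^2 \<le> (1 / b i)^2"
    unfolding norm_of_real power2_abs using b_range[OF i] by (intro power_mono) auto
  then have "l2norm_sq (\<lambda>k. complex_of_real (1 / b i - 1) * fproj (e i) (r i) w k)
      \<le> (1 / b i)^2 * l2norm_sq (fproj (e i) (r i) (Pshell eps i w))"
    unfolding l2norm_sq_mult_left Q_P[OF i w] by (intro mult_right_mono l2norm_sq_nonneg)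
  also have "\<dots> \<le> (1 / b i)^2 * l2norm_sq (Pshell eps i w)"
    by (intro mult_left_mono l2norm_sq_fproj_le Q_onb i L2_Pshell w) simp
  also have "\<dots> \<le> (1 / b i)^2 * (eps i * l2norm_sq (Pshell eps i v))"
    unfolding w_def using eps_dec[OF i] eps_pos[of 1] v
    by (intro mult_left_mono l2norm_sq_Pshell_omega_r_sqrt_le) auto
  finally show ?thesis
    by (simp add: w_def power_divide)
qed

lemma l2norm_sq_T2_correction_le:
  assumes I: "finite I" "I \<subseteq> {i. 1 \<le> i \<and> 0 < r i}" and v: "v \<in> L2"
  shows "l2norm_sq (\<lambda>k. \<Sum>i\<in>I. complex_of_real (1 / b i - 1) * fproj (e i) (r i) (omega_r_sqrt (eps 1) v) k)
    \<le> weight_sum * l2norm_sq v"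
proof -
  define F where "F i k = complex_of_real (1 / b i - 1) * fproj (e i) (r i) (omega_r_sqrt (eps 1) v) k" for i k
  define lam where "lam i = eps i / (b i)^2" for i
  have i: "1 \<le> i" "1 \<le> r i" if "i \<in> I" for i
    using I(2) that by auto
  have lam: "0 < lam i" if "i \<in> I" for i
    using eps_pos[OF i(1)[OF that]] b_range[OF i(1)[OF that]] by (simp add: lam_def)
  have F: "F i \<in> L2" if "i \<in> I" for i
    unfolding F_def using Q_onb i[OF that] by (intro L2_mult_left L2_fproj) auto
  have "l2norm_sq (F i) / lam i \<le> l2norm_sq (Pshell eps i v)" if "i \<in> I" for i
  proof -
    have "l2norm_sq (F i) \<le> lam i * l2norm_sq (Pshell eps i v)"
      unfolding F_def lam_def by (rule l2norm_sq_T2_correction_term_le[OF i(1)[OF that] v])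
    then show ?thesis
      using lam[OF that] by (simp add: pos_divide_le_eq mult.commute)
  qed
  then have "(\<Sum>i\<in>I. l2norm_sq (F i) / lam i) \<le> (\<Sum>i\<in>I. l2norm_sq (Pshell eps i v))"
    by (rule sum_mono)
  also have "\<dots> \<le> l2norm_sq v"
    using eps_dec I v by (intro sum_l2norm_sq_Pshell_le[where m = 1]) (auto simp: less_imp_le)
  finally have F_sum: "(\<Sum>i\<in>I. l2norm_sq (F i) / lam i) \<le> l2norm_sq v" .
  have "lam i \<le> lam i * real (r i)" if "i \<in> I" for i
    using mult_left_mono[of 1 "real (r i)" "lam i"] lam[OF that] i(2)[OF that] by simp
  then have "(\<Sum>i\<in>I. lam i) \<le> (\<Sum>i\<in>I. eps i / (b i)^2 * real (r i))"
    unfolding lam_def by (rule sum_mono)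
  also have "\<dots> \<le> weight_sum"
    using I by (intro sum_weights_le) auto
  finally have lam_sum: "(\<Sum>i\<in>I. lam i) \<le> weight_sum" .
  have "l2norm_sq (\<lambda>k. \<Sum>i\<in>I. F i k) \<le> (\<Sum>i\<in>I. lam i) * (\<Sum>i\<in>I. l2norm_sq (F i) / lam i)"
    by (rule l2norm_sq_sum_le_weighted[OF I(1) F lam])
  also have "\<dots> \<le> weight_sum * l2norm_sq v"
    using lam_sum F_sum lam by (intro mult_mono' sum_nonneg) (auto simp: l2norm_sq_nonneg less_imp_le)
  finally show ?thesis
    by (simp add: F_def)
qed

lemma T2_omega_r_sqrt_eq_finite_sum:
  assumes v: "v \<in> D0"
  obtains N where "T2 b e r (omega_r_sqrt (eps 1) v) = (\<lambda>k. omega_r_sqrt (eps 1) v k +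
      (\<Sum>i\<in>{i\<in>{1..N}. 0 < r i}. complex_of_real (1 / b i - 1) * fproj (e i) (r i) (omega_r_sqrt (eps 1) v) k))"
proof -
  define w where "w = omega_r_sqrt (eps 1) v"
  obtain eps0 where "v \<in> L2" "0 < eps0" and v0: "AE k in lebesgue. norm k < eps0 \<longrightarrow> v k = 0"
    using v by (auto simp: D0_def)
  then have w: "w \<in> L2"
    unfolding w_def using eps_pos[of 1] by (simp add: L2_omega_r_sqrt)
  have w0: "AE k in lebesgue. norm k < eps0 \<longrightarrow> w k = 0"
    using v0 by eventually_elim (simp add: w_def omega_r_sqrt_def)
  obtain N where N: "\<And>n. N \<le> n \<Longrightarrow> eps n < eps0"
    using order_tendstoD(2)[OF eps_lim \<open>0 < eps0\<close>] by (auto simp: eventually_sequentially)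
  \<comment> \<open>Beyond \<open>N\<close> the shells lie inside the ball where \<open>v\<close> vanishes.\<close>
  have Q0: "fproj (e i) (r i) w = (\<lambda>k. 0)" if "1 \<le> i" "N \<le> i" for i
  proof -
    have "AE k in lebesgue. Pshell eps i w k = 0"
      using eps_dec[OF that(1)] N[OF that(2)] by (intro Pshell_AE_eq_0[OF _ _ w0]) auto
    then show ?thesis
      using Q_P[OF that(1) w] by (metis fproj_eq_0_if_AE_0)
  qed
  define f where "f i k = complex_of_real (1 / b i - 1) * fproj (e i) (r i) w k" for i k
  have "(\<Sum>i. f (Suc i) k) = (\<Sum>i<N. f (Suc i) k)" for k
    by (rule suminf_finite) (auto simp: f_def Q0)
  also have "\<dots> k = (\<Sum>i\<in>{1..N}. f i k)" for k
    by (simp add: sum.atLeast1_atMost_eq)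
  also have "\<dots> k = (\<Sum>i\<in>{i\<in>{1..N}. 0 < r i}. f i k)" for k
    by (rule sum.mono_neutral_right) (auto simp: f_def fproj_def)
  finally have "T2 b e r w = (\<lambda>k. w k + (\<Sum>i\<in>{i\<in>{1..N}. 0 < r i}. f i k))"
    by (simp add: T2_def f_def)
  then show ?thesis
    using that by (simp add: w_def f_def)
qed

lemma T2_omega_r_sqrt_bound:
  assumes v: "v \<in> D0"
  shows "T2 b e r (omega_r_sqrt (eps 1) v) \<in> L2"
    and "l2norm_sq (T2 b e r (omega_r_sqrt (eps 1) v)) \<le> (2 * eps 1 + 2 * weight_sum) * l2norm_sq v"
proof -
  define w where "w = omega_r_sqrt (eps 1) v"
  obtain N where T2_eq: "T2 b e r w = (\<lambda>k. w k +
      (\<Sum>i\<in>{i\<in>{1..N}. 0 < r i}. complex_of_real (1 / b i - 1) * fproj (e i) (r i) w k))"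
    using T2_omega_r_sqrt_eq_finite_sum[OF v] unfolding w_def .
  define G where "G k = (\<Sum>i\<in>{i\<in>{1..N}. 0 < r i}. complex_of_real (1 / b i - 1) * fproj (e i) (r i) w k)" for k
  have v2: "v \<in> L2"
    using v by (simp add: D0_def)
  have w: "w \<in> L2"
    unfolding w_def using eps_pos[of 1] v2 by (simp add: L2_omega_r_sqrt)
  have G: "G \<in> L2"
    unfolding G_def using Q_onb by (intro L2_sum L2_mult_left L2_fproj) auto
  show "T2 b e r (omega_r_sqrt (eps 1) v) \<in> L2"
    using L2_add[OF w G] T2_eq by (simp add: w_def G_def)
  have "l2norm_sq w \<le> eps 1 * l2norm_sq v"
    unfolding w_def using eps_pos[of 1] v2 by (intro l2norm_sq_omega_r_sqrt_le) auto
  moreover have "l2norm_sq G \<le> weight_sum * l2norm_sq v"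
    unfolding G_def w_def by (rule l2norm_sq_T2_correction_le[OF _ _ v2]) auto
  moreover have "l2norm_sq (T2 b e r w) \<le> 2 * l2norm_sq w + 2 * l2norm_sq G"
    using l2norm_sq_add_le[OF w G] T2_eq by (simp add: G_def)
  ultimately show "l2norm_sq (T2 b e r (omega_r_sqrt (eps 1) v)) \<le> (2 * eps 1 + 2 * weight_sum) * l2norm_sq v"
    unfolding w_def by argo
qed

end

theorem lemma5p4:
  fixes eps :: "nat \<Rightarrow> real" and b :: "nat \<Rightarrow> real"
    and e :: "nat \<Rightarrow> nat \<Rightarrow> kfun" and r :: "nat \<Rightarrow> nat"
  assumes eps_pos: "\<forall>i\<ge>1. eps i > 0"
    and eps_dec: "\<forall>i\<ge>1. eps (Suc i) < eps i"
    and eps_lim: "eps \<longlonglongrightarrow> 0"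
    and Q_onb: "\<forall>i\<ge>1. orthonormal_fam (e i) (r i)"
    and Q_Gam: "\<forall>i\<ge>1. \<forall>v\<in>L2. AE k in lebesgue.
                  fproj (e i) (r i) (Gam v) k = Gam (fproj (e i) (r i) v) k"
    and Q_P: "\<forall>i\<ge>1. \<forall>v\<in>L2. fproj (e i) (r i) (Pshell eps i v) = fproj (e i) (r i) v"
    and b_range: "\<forall>i\<ge>1. 0 < b i \<and> b i < 1"
    and b_lim: "b \<longlonglongrightarrow> 0"
    and summ: "summable (\<lambda>i. eps (Suc i) / (b (Suc i))^2 * real (r (Suc i)))"
  shows "\<exists>C. \<forall>v\<in>D0. T2 b e r (omega_r_sqrt (eps 1) v) \<in> L2 \<and>
             l2norm (T2 b e r (omega_r_sqrt (eps 1) v)) \<le> C * l2norm v"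
proof -
  interpret T2_setting eps b e r
    using eps_pos eps_dec eps_lim Q_onb Q_P b_range summ by unfold_locales auto
  have "l2norm (T2 b e r (omega_r_sqrt (eps 1) v)) \<le> sqrt (2 * eps 1 + 2 * weight_sum) * l2norm v"
    if "v \<in> D0" for v
    using real_sqrt_le_mono[OF T2_omega_r_sqrt_bound(2)[OF that]]
    by (simp only: l2norm_eq_sqrt real_sqrt_mult)
  with T2_omega_r_sqrt_bound(1) show ?thesis
    by blast
qed

end
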